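(* Let $3\le k\le n-1$ and let $T$ be a tree attaining the maximum value of $M_2$ over $\mathcal{CT}_{n,k}$. If $T$ contains a pendent vertex adjacent to a branching vertex, then $T$ contains no pendent path of length greater than $2$.
   Context: A chemical tree is a tree with maximum degree at most $4$. A pendent vertex has degree $1$; a branching vertex has degree greater than $2$. A pendent path is a path $u_0\cdots u_r$ ($r\ge1$) with $u_0$ pendent, $u_r$ branching and all internal vertices of degree $2$; its length is $r$. A segment of a tree is a path of positive length neither of whose end vertices has degree $2$ and all of whose internal vertices have degree $2$. $\mathcal{CT}_{n,k}$ is the class of all $n$-vertex chemical trees with exactly $k$ segments. $M_2(G)=\sum_{uv\in E(G)}d_ud_v$, where $d_v$ is the degree of $v$. *)

theory Defs
  imports Main
begin

definition simple_graph :: "'a set \<Rightarrow> 'a set set \<Rightarrow> bool" where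
  "simple_graph V E \<longleftrightarrow> finite V \<and> (\<forall>e\<in>E. e \<subseteq> V \<and> card e = 2)"

definition deg :: "'a set set \<Rightarrow> 'a \<Rightarrow> nat" where
  "deg E v = card {e\<in>E. v \<in> e}"

definition is_path :: "'a set \<Rightarrow> 'a set set \<Rightarrow> 'a list \<Rightarrow> bool" where
  "is_path V E ps \<longleftrightarrow> ps \<noteq> [] \<and> distinct ps \<and> set ps \<subseteq> V \<and>
     (\<forall>i. Suc i < length ps \<longrightarrow> {ps ! i, ps ! Suc i} \<in> E)"

definition connected_graph :: "'a set \<Rightarrow> 'a set set \<Rightarrow> bool" where
  "connected_graph V E \<longleftrightarrow>
     (\<forall>u\<in>V. \<forall>v\<in>V. \<exists>ps. is_path V E ps \<and> hd ps = u \<and> last ps = v)"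

definition has_cycle :: "'a set \<Rightarrow> 'a set set \<Rightarrow> bool" where
  "has_cycle V E \<longleftrightarrow> (\<exists>ps. is_path V E ps \<and> length ps \<ge> 3 \<and> {last ps, hd ps} \<in> E)"

definition is_tree :: "'a set \<Rightarrow> 'a set set \<Rightarrow> bool" where
  "is_tree V E \<longleftrightarrow> simple_graph V E \<and> V \<noteq> {} \<and> connected_graph V E \<and> \<not> has_cycle V E"

definition chemical_tree :: "'a set \<Rightarrow> 'a set set \<Rightarrow> bool" where
  "chemical_tree V E \<longleftrightarrow> is_tree V E \<and> (\<forall>v\<in>V. deg E v \<le> 4)"

definition is_segment :: "'a set \<Rightarrow> 'a set set \<Rightarrow> 'a list \<Rightarrow> bool" where
  "is_segment V E ps \<longleftrightarrow> is_path V E ps \<and> length ps \<ge> 2 \<and>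
     deg E (hd ps) \<noteq> 2 \<and> deg E (last ps) \<noteq> 2 \<and>
     (\<forall>i. 0 < i \<and> Suc i < length ps \<longrightarrow> deg E (ps ! i) = 2)"

text \<open>Segments are counted as unordered paths; in a tree a path is determined
  (up to reversal) by its vertex set.\<close>
definition num_segments :: "'a set \<Rightarrow> 'a set set \<Rightarrow> nat" where
  "num_segments V E = card {set ps | ps. is_segment V E ps}"

definition CT :: "'a set \<Rightarrow> 'a set set \<Rightarrow> nat \<Rightarrow> nat \<Rightarrow> bool" where
  "CT V E n k \<longleftrightarrow> chemical_tree V E \<and> card V = n \<and> num_segments V E = k"

text \<open>Pendent path u_0 ... u_r (r \<ge> 1): u_0 pendent, u_r branching, internal degree 2.
  Its length is r = length ps - 1.\<close>
definition pendent_path :: "'a set \<Rightarrow> 'a set set \<Rightarrow> 'a list \<Rightarrow> bool" where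
  "pendent_path V E ps \<longleftrightarrow> is_path V E ps \<and> length ps \<ge> 2 \<and>
     deg E (hd ps) = 1 \<and> deg E (last ps) > 2 \<and>
     (\<forall>i. 0 < i \<and> Suc i < length ps \<longrightarrow> deg E (ps ! i) = 2)"

definition M2 :: "'a set set \<Rightarrow> nat" where
  "M2 E = (\<Sum>e\<in>E. \<Prod>v\<in>e. deg E v)"

end

theory Submission
  imports Defs
begin

text \<open>Let \<open>w\<^sub>0 w\<^sub>1 \<dots> w\<^sub>r\<close> (\<open>r \<ge> 3\<close>) be a pendent path and \<open>u\<close> a pendent vertex adjacent to a
  branching vertex \<open>v\<close>. Detaching \<open>w\<^sub>0\<close> from \<open>w\<^sub>1\<close> and subdividing \<open>uv\<close> by it yields a chemical
  tree on the same vertex set with the same number of segments: \<open>w\<^sub>0 \<dots> w\<^sub>r\<close> and \<open>uv\<close> become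
  \<open>w\<^sub>1 \<dots> w\<^sub>r\<close> and \<open>u w\<^sub>0 v\<close>, and every other segment is untouched. In \<open>M\<^sub>2\<close> only the terms
  of \<open>w\<^sub>0w\<^sub>1, uv, w\<^sub>1w\<^sub>2\<close>, namely \<open>2 + d\<^sub>v + 4\<close> (\<open>d\<^sub>w\<^sub>2 = 2\<close> as \<open>r \<ge> 3\<close>), change, into the terms
  \<open>2 + 2d\<^sub>v + 2\<close> of \<open>uw\<^sub>0, w\<^sub>0v, w\<^sub>1w\<^sub>2\<close>. So \<open>M\<^sub>2\<close> grows by \<open>d\<^sub>v - 2 > 0\<close>, contradicting maximality.\<close>

section \<open>Simple graphs and degrees\<close>

lemma simple_graph_finite_edges: "simple_graph V E \<Longrightarrow> finite E"
  unfolding simple_graph_def by (meson PowI finite_Pow_iff finite_subset subsetI)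

lemma simple_graph_edge:
  "simple_graph V E \<Longrightarrow> {x,y} \<in> E \<Longrightarrow> x \<noteq> y \<and> x \<in> V \<and> y \<in> V"
  unfolding simple_graph_def by (cases "x = y") auto

lemma simple_graph_edge_at:
  assumes "simple_graph V E" "e \<in> E" "x \<in> e"
  obtains y where "e = {x,y}" "y \<noteq> x"
proof -
  obtain a b where "e = {a,b}" "a \<noteq> b"
    using assms(1,2) unfolding simple_graph_def by (meson card_2_iff)
  with assms(3) that show thesis by (auto simp: insert_commute)
qed

lemma card_le_deg: "finite E \<Longrightarrow> A \<subseteq> {e\<in>E. x \<in> e} \<Longrightarrow> card A \<le> deg E x"
  unfolding deg_def by (simp add: card_mono)

lemma leaf_neighbour_unique:
  assumes "simple_graph V E" "deg E x = 1" "{x,a} \<in> E" "{x,b} \<in> E"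
  shows "a = b"
proof (rule ccontr)
  assume "a \<noteq> b"
  then have "card {{x,a},{x,b}} = 2" by (auto simp: doubleton_eq_iff)
  moreover have "card {{x,a},{x,b}} \<le> deg E x"
    using assms by (intro card_le_deg simple_graph_finite_edges) auto
  ultimately show False using assms(2) by simp
qed

lemma deg2_neighbour_cases:
  assumes "simple_graph V E" "deg E x = 2" "{x,a} \<in> E" "{x,b} \<in> E" "a \<noteq> b" "{x,c} \<in> E"
  shows "c = a \<or> c = b"
proof (rule ccontr)
  assume "\<not> (c = a \<or> c = b)"
  then have "card {{x,a},{x,b},{x,c}} = 3"
    using assms(5) by (auto simp: doubleton_eq_iff)
  moreover have "card {{x,a},{x,b},{x,c}} \<le> deg E x"
    using assms by (intro card_le_deg simple_graph_finite_edges) auto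
  ultimately show False using assms(2) by simp
qed

lemma incident_edges_leaf:
  assumes "simple_graph V E" "deg E x = 1" "{x,a} \<in> E"
  shows "{e\<in>E. x \<in> e} = {{x,a}}"
proof -
  have "e = {x,a}" if "e \<in> E" "x \<in> e" for e
    using simple_graph_edge_at[OF assms(1) that] leaf_neighbour_unique[OF assms] that(1)
    by metis
  then show ?thesis using assms(3) by blast
qed

section \<open>Paths and connectivity\<close>

definition adjacent :: "'a set set \<Rightarrow> 'a \<Rightarrow> 'a \<Rightarrow> bool" where
  "adjacent E x y \<longleftrightarrow> {x,y} \<in> E"

lemma adjacent_sym: "adjacent E x y \<longleftrightarrow> adjacent E y x"
  by (simp add: adjacent_def insert_commute)

lemma rtranclp_adjacent_sym: "(adjacent E)\<^sup>*\<^sup>* x y \<Longrightarrow> (adjacent E)\<^sup>*\<^sup>* y x"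
proof (induction rule: rtranclp_induct)
  case (step y z)
  then show ?case by (metis adjacent_sym converse_rtranclp_into_rtranclp)
qed simp

lemma rtranclp_map:
  assumes "\<And>x y. R x y \<Longrightarrow> S\<^sup>*\<^sup>* (h x) (h y)" "R\<^sup>*\<^sup>* a b"
  shows "S\<^sup>*\<^sup>* (h a) (h b)"
  using assms(2) by (induction rule: rtranclp_induct) (auto intro: rtranclp_trans assms(1))

lemma is_path_singleton: "is_path V E [x] \<longleftrightarrow> x \<in> V"
  by (auto simp: is_path_def)

lemma is_path_Cons_Cons:
  "is_path V E (x # y # ys) \<longleftrightarrow> x \<in> V \<and> x \<notin> set (y # ys) \<and> {x,y} \<in> E \<and> is_path V E (y # ys)"
  unfolding is_path_def by (auto simp: less_Suc_eq_0_disj all_conj_distrib)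

lemma is_path_appendD: "is_path V E (xs @ ys) \<Longrightarrow> ys \<noteq> [] \<Longrightarrow> is_path V E ys"
proof (induction xs)
  case (Cons x xs)
  then show ?case by (cases "xs @ ys") (auto simp: is_path_Cons_Cons)
qed simp

lemma is_path_subgraph:
  assumes "is_path V G ps" "\<And>x y. x \<in> set ps \<Longrightarrow> y \<in> set ps \<Longrightarrow> {x,y} \<in> G \<Longrightarrow> {x,y} \<in> G'"
  shows "is_path V G' ps"
  using assms unfolding is_path_def by (metis Suc_lessD nth_mem)

lemma is_path_rev: "is_path V E ps \<Longrightarrow> is_path V E (rev ps)"
  unfolding is_path_def
proof (intro conjI allI impI; (elim conjE)?)
  fix i assume edges: "\<forall>i. Suc i < length ps \<longrightarrow> {ps ! i, ps ! Suc i} \<in> E"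
    and i: "Suc i < length (rev ps)"
  let ?j = "length ps - Suc (Suc i)"
  have "{ps ! ?j, ps ! Suc ?j} \<in> E" using edges i by auto
  moreover have "rev ps ! i = ps ! Suc ?j" "rev ps ! Suc i = ps ! ?j"
    using i by (auto simp: rev_nth Suc_diff_Suc)
  ultimately show "{rev ps ! i, rev ps ! Suc i} \<in> E" by (simp add: insert_commute)
qed auto

lemma is_path_nth_neighbours:
  assumes "is_path V E ps" "0 < i" "Suc i < length ps"
  shows "{ps ! i, ps ! (i - 1)} \<in> E" "{ps ! i, ps ! Suc i} \<in> E" "ps ! (i - 1) \<noteq> ps ! Suc i"
proof -
  have "Suc (i - 1) < length ps" using assms(2,3) by simp
  then have "{ps ! (i - 1), ps ! Suc (i - 1)} \<in> E" using assms(1) by (simp only: is_path_def)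
  then show "{ps ! i, ps ! (i - 1)} \<in> E" using assms(2) by (simp add: insert_commute)
  show "{ps ! i, ps ! Suc i} \<in> E" using assms unfolding is_path_def by auto
  show "ps ! (i - 1) \<noteq> ps ! Suc i"
    using assms unfolding is_path_def by (auto simp: nth_eq_iff_index_eq)
qed

lemma is_path_rtranclp_adjacent: "is_path V E ps \<Longrightarrow> (adjacent E)\<^sup>*\<^sup>* (hd ps) (last ps)"
proof (induction ps rule: induct_list012)
  case (3 x y zs)
  then show ?case
    by (auto simp: is_path_Cons_Cons adjacent_def intro: converse_rtranclp_into_rtranclp)
qed (simp_all add: is_path_def)

lemma rtranclp_adjacent_is_path:
  assumes "(adjacent E)\<^sup>*\<^sup>* a b" "b \<in> V" "simple_graph V E"
  obtains ps where "is_path V E ps" "hd ps = a" "last ps = b"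
proof -
  from assms(1) have "\<exists>ps. is_path V E ps \<and> hd ps = a \<and> last ps = b"
  proof (induction rule: converse_rtranclp_induct)
    case base
    show ?case using assms(2) by (intro exI[of _ "[b]"]) (simp add: is_path_singleton)
  next
    case (step a c)
    then obtain ps where ps: "is_path V E ps" "hd ps = c" "last ps = b" by blast
    show ?case
    proof (cases "a \<in> set ps")
      case True
      then obtain xs ys where "ps = xs @ a # ys" by (meson split_list)
      then show ?thesis using ps is_path_appendD[of V E xs "a # ys"] by (intro exI[of _ "a # ys"]) auto
    next
      case False
      obtain y zs where ps_Cons: "ps = y # zs" using ps(1) by (cases ps) (auto simp: is_path_def)
      have "{a,c} \<in> E" using step(1) by (simp add: adjacent_def)
      then show ?thesis using ps ps_Cons False simple_graph_edge[OF assms(3)]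
        by (intro exI[of _ "a # ps"]) (auto simp: is_path_Cons_Cons)
    qed
  qed
  then show thesis using that by blast
qed

lemma connected_graph_iff_rtranclp:
  "simple_graph V E \<Longrightarrow> connected_graph V E \<longleftrightarrow> (\<forall>x\<in>V. \<forall>y\<in>V. (adjacent E)\<^sup>*\<^sup>* x y)"
  unfolding connected_graph_def
  by (metis is_path_rtranclp_adjacent rtranclp_adjacent_is_path)

section \<open>Cycles and segments\<close>

lemma cycle_vertex_neighbours:
  assumes "is_path V E ps" "3 \<le> length ps" "{last ps, hd ps} \<in> E" "x \<in> set ps"
  obtains a b where "a \<in> set ps" "b \<in> set ps" "a \<noteq> b" "{x,a} \<in> E" "{x,b} \<in> E"
proof -
  obtain i where i: "i < length ps" "ps ! i = x" using assms(4) by (meson in_set_conv_nth)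
  have dist: "distinct ps" using assms(1) by (simp add: is_path_def)
  have "ps \<noteq> []" using assms(2) by auto
  then have hd: "hd ps = ps ! 0" and last: "last ps = ps ! (length ps - 1)"
    by (simp_all add: hd_conv_nth last_conv_nth)
  consider "i = 0" | "i = length ps - 1" | "0 < i" "Suc i < length ps" using i by linarith
  then show thesis
  proof cases
    case 1
    have "{ps ! 0, ps ! Suc 0} \<in> E" using assms(1,2) unfolding is_path_def by simp
    moreover have "ps ! 1 \<noteq> ps ! (length ps - 1)"
      using dist assms(2) by (simp add: nth_eq_iff_index_eq)
    ultimately show thesis
      using that[of "ps ! 1" "last ps"] assms(2,3) 1 i hd last by (auto simp: insert_commute)
  next
    case 2
    have "Suc (i - 1) < length ps" using 2 assms(2) by simp
    then have "{ps ! (i - 1), ps ! Suc (i - 1)} \<in> E" using assms(1) by (simp only: is_path_def)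
    moreover have "i - 1 < length ps" "0 < length ps" "i - 1 \<noteq> 0" "Suc (i - 1) = i"
      using 2 assms(2) by auto
    moreover from this(1-3) have "ps ! (i - 1) \<noteq> ps ! 0"
      by (metis nth_eq_iff_index_eq[OF dist])
    ultimately show thesis
      using that[of "ps ! (i - 1)" "hd ps"] assms(3) 2 i hd last by (auto simp: insert_commute)
  next
    case 3
    show thesis
      using that[of "ps ! (i - 1)" "ps ! Suc i"] is_path_nth_neighbours[OF assms(1) 3] i 3 by auto
  qed
qed

lemma leaf_not_on_cycle:
  assumes "simple_graph V E" "deg E x = 1"
    and "is_path V E ps" "3 \<le> length ps" "{last ps, hd ps} \<in> E"
  shows "x \<notin> set ps"
  using cycle_vertex_neighbours[OF assms(3-5)] leaf_neighbour_unique[OF assms(1,2)] by metis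

lemma is_segment_rev: "is_segment V E qs \<Longrightarrow> is_segment V E (rev qs)"
proof -
  assume seg: "is_segment V E qs"
  have "deg E (rev qs ! i) = 2" if "0 < i" "Suc i < length (rev qs)" for i
  proof -
    have "rev qs ! i = qs ! (length qs - Suc i)" using that by (simp add: rev_nth)
    moreover have "0 < length qs - Suc i" "Suc (length qs - Suc i) < length qs" using that by auto
    ultimately show ?thesis using seg unfolding is_segment_def by auto
  qed
  then show ?thesis using seg is_path_rev unfolding is_segment_def
    by (auto simp: hd_rev last_rev)
qed

lemma segment_end_vertex:
  assumes "is_segment V E qs" "x \<in> set qs" "deg E x \<noteq> 2"
  shows "x = hd qs \<or> x = last qs"
proof -
  obtain i where i: "i < length qs" "qs ! i = x" using assms(2) by (meson in_set_conv_nth)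
  then have "i = 0 \<or> i = length qs - 1" using assms(1,3) unfolding is_segment_def by force
  moreover have "qs \<noteq> []" using i by auto
  ultimately show ?thesis using i by (auto simp: hd_conv_nth last_conv_nth)
qed

lemma segment_orient:
  assumes "is_segment V E qs" "x \<in> set qs" "deg E x \<noteq> 2"
  obtains qs' where "is_segment V E qs'" "set qs' = set qs" "qs' ! 0 = x"
proof -
  have "qs \<noteq> []" using assms(2) by auto
  then consider "qs ! 0 = x" | "rev qs ! 0 = x"
    using segment_end_vertex[OF assms] by (auto simp: hd_conv_nth last_conv_nth rev_nth)
  then show thesis
  proof cases
    case 1
    then show thesis using that[of qs] assms(1) by simp
  next
    case 2
    then show thesis using that[of "rev qs"] is_segment_rev[OF assms(1)] by simp
  qed
qed

text \<open>Internal vertices have degree 2, so a segment is continued uniquely from its first edge.\<close>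

lemma segment_eqI:
  assumes "simple_graph V E" "is_segment V E ps" "is_segment V E qs"
    and "ps ! 0 = qs ! 0" "ps ! 1 = qs ! 1"
  shows "ps = qs"
proof -
  have paths: "is_path V E ps" "is_path V E qs" using assms(2,3) by (auto simp: is_segment_def)
  have common: "ps ! i = qs ! i" if "i < length ps" "i < length qs" for i
    using that
  proof (induction i rule: less_induct)
    case (less i)
    show ?case
    proof (cases "i \<le> 1")
      case True
      then show ?thesis using assms(4,5) by (cases i) auto
    next
      case False
      define j where "j = i - 1"
      have j: "0 < j" "Suc j < length ps" "Suc j < length qs" "i = Suc j"
        using False less.prems by (auto simp: j_def)
      have IH: "ps ! j = qs ! j" "ps ! (j - 1) = qs ! (j - 1)" using less.IH j by auto
      note nbs_ps = is_path_nth_neighbours[OF paths(1) j(1,2)]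
        and nbs_qs = is_path_nth_neighbours[OF paths(2) j(1,3)]
      have "deg E (ps ! j) = 2" using assms(2) j unfolding is_segment_def by auto
      then have "qs ! Suc j = ps ! (j - 1) \<or> qs ! Suc j = ps ! Suc j"
        using deg2_neighbour_cases[OF assms(1) _ nbs_ps] nbs_qs(2) IH(1) by simp
      then show ?thesis using nbs_qs(3) IH(2) j(4) by auto
    qed
  qed
  have no_shorter: False
    if "is_segment V E xs" "is_segment V E ys" "length xs < length ys"
      "\<And>i. i < length xs \<Longrightarrow> xs ! i = ys ! i" for xs ys
  proof -
    let ?i = "length xs - 1"
    have "2 \<le> length xs" using that(1) by (simp add: is_segment_def)
    then have "xs \<noteq> []" by auto
    with \<open>2 \<le> length xs\<close> have "deg E (xs ! ?i) \<noteq> 2" "deg E (ys ! ?i) = 2"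
      using that(1,2,3) unfolding is_segment_def by (auto simp: last_conv_nth)
    moreover have "xs ! ?i = ys ! ?i" using that(4) \<open>2 \<le> length xs\<close> by simp
    ultimately show False by simp
  qed
  have "length ps = length qs"
  proof (cases rule: linorder_cases[of "length ps" "length qs"])
    case less
    then show ?thesis using no_shorter[OF assms(2,3) less] common by simp
  next
    case greater
    then show ?thesis using no_shorter[OF assms(3,2) greater] common by simp
  qed
  then show ?thesis using common by (auto intro: nth_equalityI)
qed

lemma segment_through_leaf:
  assumes "simple_graph V E" "deg E x = 1" "is_segment V E ps" "ps ! 0 = x"
    and "is_segment V E qs" "x \<in> set qs"
  shows "set qs = set ps"
proof -
  obtain qs' where qs': "is_segment V E qs'" "set qs' = set qs" "qs' ! 0 = x"
    using segment_orient[OF assms(5,6)] assms(2) by auto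
  have "{qs' ! 0, qs' ! 1} \<in> E" "{ps ! 0, ps ! 1} \<in> E"
    using qs'(1) assms(3) unfolding is_segment_def is_path_def by auto
  then have "{x, qs' ! 1} \<in> E" "{x, ps ! 1} \<in> E" using qs'(3) assms(4) by simp_all
  then have "qs' ! 1 = ps ! 1" by (rule leaf_neighbour_unique[OF assms(1,2)])
  then have "qs' = ps" using segment_eqI[OF assms(1) qs'(1) assms(3)] qs'(3) assms(4) by simp
  with qs'(2) show ?thesis by simp
qed

lemma segment_deg2_neighbour:
  assumes "simple_graph V E" "is_segment V E qs" "x \<in> set qs" "deg E x = 2" "{x,a} \<in> E"
  shows "a \<in> set qs"
proof -
  obtain i where i: "i < length qs" "qs ! i = x" using assms(3) by (meson in_set_conv_nth)
  have "qs \<noteq> []" using assms(3) by auto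
  then have "i \<noteq> 0" "i \<noteq> length qs - 1"
    using assms(2,4) i unfolding is_segment_def by (auto simp: hd_conv_nth last_conv_nth)
  then have "0 < i" "Suc i < length qs" using i by auto
  note nbs = is_path_nth_neighbours[OF _ this, of V E]
  have "a = qs ! (i - 1) \<or> a = qs ! Suc i"
    using deg2_neighbour_cases[OF assms(1,4)] nbs assms(2,5) i(2)
    unfolding is_segment_def by blast
  then show ?thesis using i \<open>Suc i < length qs\<close> by auto
qed

lemma is_segment_cong:
  assumes "\<And>x. x \<in> set qs \<Longrightarrow> deg G' x = deg G x"
    and "\<And>x y. x \<in> set qs \<Longrightarrow> y \<in> set qs \<Longrightarrow> {x,y} \<in> G' \<longleftrightarrow> {x,y} \<in> G"
  shows "is_segment V G' qs \<longleftrightarrow> is_segment V G qs"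
proof -
  have "is_path V G' qs \<longleftrightarrow> is_path V G qs"
    using is_path_subgraph[of V _ qs] assms(2) by blast
  moreover have "qs \<noteq> [] \<Longrightarrow> deg G' (hd qs) = deg G (hd qs) \<and> deg G' (last qs) = deg G (last qs)"
    using assms(1) by simp
  moreover have "deg G' (qs ! i) = deg G (qs ! i)" if "i < length qs" for i
    using assms(1) that by simp
  ultimately show ?thesis unfolding is_segment_def
    by (metis Suc_lessD list.size(3) not_numeral_le_zero)
qed

definition segment_sets :: "'a set \<Rightarrow> 'a set set \<Rightarrow> 'a set set" where
  "segment_sets V E = {set qs | qs. is_segment V E qs}"

lemma finite_segment_sets: "finite V \<Longrightarrow> finite (segment_sets V E)"
proof -
  assume "finite V"
  moreover have "segment_sets V E \<subseteq> Pow V"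
    unfolding segment_sets_def is_segment_def is_path_def by auto
  ultimately show ?thesis by (meson finite_Pow_iff finite_subset)
qed

section \<open>Moving the pendent vertex of a long pendent path\<close>

locale long_pendent_path =
  fixes V :: "'a set" and E :: "'a set set" and u v :: 'a and ps :: "'a list"
  assumes chemical: "chemical_tree V E"
    and edge_uv: "{u,v} \<in> E" and deg_u: "deg E u = 1" and deg_v: "2 < deg E v"
    and pendent: "pendent_path V E ps" and length_ps: "4 \<le> length ps"
begin

abbreviation "w0 \<equiv> ps ! 0"
abbreviation "w1 \<equiv> ps ! 1"
abbreviation "w2 \<equiv> ps ! 2"

definition E' :: "'a set set" where
  "E' = E - {{w0,w1},{u,v}} \<union> {{u,w0},{w0,v}}"

lemma simple: "simple_graph V E"
  using chemical by (simp add: chemical_tree_def is_tree_def)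

lemma finite_E: "finite E"
  using simple by (rule simple_graph_finite_edges)

lemma path_ps: "is_path V E ps" and distinct_ps: "distinct ps"
  using pendent by (simp_all add: pendent_path_def is_path_def)

lemma ps_nonempty: "ps \<noteq> []"
  using length_ps by auto

lemma deg_w0: "deg E w0 = 1" and deg_last: "2 < deg E (last ps)"
  and deg_inner: "0 < i \<Longrightarrow> Suc i < length ps \<Longrightarrow> deg E (ps ! i) = 2"
  using pendent ps_nonempty by (auto simp: pendent_path_def hd_conv_nth)

lemma deg_w1: "deg E w1 = 2" and deg_w2: "deg E w2 = 2"
  using deg_inner[of 1] deg_inner[of 2] length_ps by simp_all

lemma edge_w0_w1: "{w0,w1} \<in> E" and edge_w1_w2: "{w1,w2} \<in> E"
proof -
  have "\<forall>i. Suc i < length ps \<longrightarrow> {ps ! i, ps ! Suc i} \<in> E"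
    using path_ps by (simp add: is_path_def)
  from this[rule_format, of 0] this[rule_format, of 1] show "{w0,w1} \<in> E" "{w1,w2} \<in> E"
    using length_ps by (simp_all add: numeral_2_eq_2)
qed

lemma w_distinct: "w0 \<noteq> w1" "w0 \<noteq> w2" "w1 \<noteq> w2"
proof -
  have "0 < length ps" "1 < length ps" "2 < length ps" using length_ps by auto
  then show "w0 \<noteq> w1" "w0 \<noteq> w2" "w1 \<noteq> w2"
    by (simp_all add: nth_eq_iff_index_eq[OF distinct_ps])
qed

lemma uv_distinct: "u \<noteq> v" and in_V: "u \<in> V" "v \<in> V" "w0 \<in> V"
  using simple_graph_edge[OF simple edge_uv] simple_graph_edge[OF simple edge_w0_w1] by auto

lemma neighbour_w0: "{w0,x} \<in> E \<Longrightarrow> x = w1"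
  using leaf_neighbour_unique[OF simple deg_w0 _ edge_w0_w1] by blast

lemma neighbour_w1: "{w1,x} \<in> E \<Longrightarrow> x = w0 \<or> x = w2"
  using deg2_neighbour_cases[OF simple deg_w1 _ edge_w1_w2, of w0] edge_w0_w1 w_distinct
  by (auto simp: insert_commute)

lemma leaf_on_ps: "x \<in> set ps \<Longrightarrow> deg E x = 1 \<Longrightarrow> x = w0"
proof -
  assume "x \<in> set ps" "deg E x = 1"
  then obtain i where i: "i < length ps" "ps ! i = x" "deg E (ps ! i) = 1"
    by (metis in_set_conv_nth)
  have "last ps = ps ! (length ps - 1)" using ps_nonempty by (simp add: last_conv_nth)
  moreover have "i = length ps - 1" if "\<not> Suc i < length ps" using that i(1) by simp
  ultimately have "i = 0" using i deg_inner[of i] deg_last by (cases "Suc i < length ps") auto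
  with i show "x = w0" by simp
qed

lemma u_w0: "u \<noteq> w0"
  using neighbour_w0 edge_uv deg_v deg_w1 by auto

lemma u_notin_ps: "u \<notin> set ps"
  using leaf_on_ps deg_u u_w0 by blast

lemma u_w1: "u \<noteq> w1" and u_w2: "u \<noteq> w2"
proof -
  have "1 < length ps" "2 < length ps" using length_ps by simp_all
  then have "w1 \<in> set ps" "w2 \<in> set ps" by simp_all
  then show "u \<noteq> w1" "u \<noteq> w2" using u_notin_ps by auto
qed

lemma v_w0: "v \<noteq> w0" and v_w1: "v \<noteq> w1"
  using deg_v deg_w0 deg_w1 by auto

lemma incident_E_w0: "{e\<in>E. w0 \<in> e} = {{w0,w1}}"
  by (rule incident_edges_leaf[OF simple deg_w0 edge_w0_w1])

lemma incident_E_u: "{e\<in>E. u \<in> e} = {{u,v}}"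
  by (rule incident_edges_leaf[OF simple deg_u edge_uv])

lemma not_edge_u_w0: "{u,w0} \<notin> E" and not_edge_w0_v: "{w0,v} \<notin> E"
  using neighbour_w0[of u] neighbour_w0[of v] u_notin_ps v_w1 length_ps
  by (auto simp: insert_commute)

lemma edge_E'_u_w0: "{u,w0} \<in> E'" and edge_E'_w0_v: "{w0,v} \<in> E'"
  by (simp_all add: E'_def)

lemma incident_E'_w0: "{e\<in>E'. w0 \<in> e} = {{u,w0},{w0,v}}"
  using incident_E_w0 unfolding E'_def by blast

lemma incident_E'_u: "{e\<in>E'. u \<in> e} = {{u,w0}}"
  using incident_E_u u_w0 uv_distinct unfolding E'_def by blast

lemma neighbour_E'_w0: "{w0,a} \<in> E' \<Longrightarrow> a = u \<or> a = v"
proof -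
  assume "{w0,a} \<in> E'"
  then have "{w0,a} \<in> {e\<in>E'. w0 \<in> e}" by simp
  then have "{w0,a} = {u,w0} \<or> {w0,a} = {w0,v}" using incident_E'_w0 by simp
  then show ?thesis using u_w0 by (auto simp: doubleton_eq_iff)
qed

lemma deg_E'_w0: "deg E' w0 = 2"
  unfolding deg_def incident_E'_w0 using uv_distinct u_w0 v_w0 by (auto simp: doubleton_eq_iff)

lemma deg_E'_u: "deg E' u = 1"
  unfolding deg_def incident_E'_u by simp

lemma deg_E'_w1: "deg E' w1 = 1"
proof -
  have "{e\<in>E'. w1 \<in> e} = {e\<in>E. w1 \<in> e} - {{w0,w1}}"
    using u_w1 v_w1 w_distinct unfolding E'_def by (auto simp: doubleton_eq_iff)
  then show ?thesis
    using deg_w1 edge_w0_w1 finite_E by (simp add: deg_def card_Diff_singleton)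
qed

lemma deg_E'_eq: "x \<noteq> w0 \<Longrightarrow> x \<noteq> w1 \<Longrightarrow> deg E' x = deg E x"
proof -
  assume x: "x \<noteq> w0" "x \<noteq> w1"
  consider "x = u" | "x = v" | "x \<noteq> u" "x \<noteq> v" by blast
  then show ?thesis
  proof cases
    case 1
    then show ?thesis using deg_E'_u deg_u by simp
  next
    case 2
    have "{e\<in>E'. v \<in> e} = insert {w0,v} ({e\<in>E. v \<in> e} - {{u,v}})"
      using v_w0 v_w1 unfolding E'_def by auto
    moreover have "{u,v} \<in> {e\<in>E. v \<in> e}" "{w0,v} \<notin> E" using edge_uv not_edge_w0_v by auto
    moreover have "finite {e\<in>E. v \<in> e}" using finite_E by simp
    ultimately have "deg E' v = Suc (deg E v - 1)"
      unfolding deg_def by (simp add: card_Diff_singleton)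
    then show ?thesis using 2 deg_v by simp
  next
    case 3
    then have "{e\<in>E'. x \<in> e} = {e\<in>E. x \<in> e}" using x unfolding E'_def by auto
    then show ?thesis by (simp add: deg_def)
  qed
qed

lemma edge_E'_iff: "x \<notin> {u,w0} \<Longrightarrow> y \<notin> {u,w0} \<Longrightarrow> {x,y} \<in> E' \<longleftrightarrow> {x,y} \<in> E"
  unfolding E'_def by (auto simp: doubleton_eq_iff)

lemma simple_E': "simple_graph V E'"
  using simple in_V u_w0 v_w0 unfolding simple_graph_def E'_def by auto

text \<open>Collapsing \<open>w0\<close> onto \<open>w1\<close> turns every edge of \<open>E\<close> into a walk of \<open>E'\<close>.\<close>

lemma rtranclp_E'_to_u: "x \<in> V \<Longrightarrow> (adjacent E')\<^sup>*\<^sup>* x u"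
proof -
  assume "x \<in> V"
  have u_w0_v: "adjacent E' u w0" "adjacent E' w0 v"
    using edge_E'_u_w0 edge_E'_w0_v by (simp_all add: adjacent_def)
  define h where "h y = (if y = w0 then w1 else y)" for y
  have lift: "(adjacent E')\<^sup>*\<^sup>* (h a) (h b)" if "adjacent E a b" for a b
  proof -
    have ab: "{a,b} \<in> E" using that by (simp add: adjacent_def)
    consider "w0 \<in> {a,b}" | "{a,b} = {u,v}" | "w0 \<notin> {a,b}" "{a,b} \<noteq> {u,v}" by blast
    then show ?thesis
    proof cases
      case 1
      then have "{a,b} \<in> {e\<in>E. w0 \<in> e}" using ab by simp
      then have "{a,b} = {w0,w1}" using incident_E_w0 by simp
      then have "h a = h b" unfolding h_def by (auto simp: doubleton_eq_iff)
      then show ?thesis by simp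
    next
      case 2
      have "(adjacent E')\<^sup>*\<^sup>* u v" "(adjacent E')\<^sup>*\<^sup>* v u"
        using u_w0_v rtranclp_adjacent_sym by (meson converse_rtranclp_into_rtranclp r_into_rtranclp)+
      moreover have "h u = u" "h v = v" using u_w0 v_w0 by (simp_all add: h_def)
      ultimately show ?thesis using 2 by (auto simp: doubleton_eq_iff)
    next
      case 3
      then have "h a = a" "h b = b" by (auto simp: h_def)
      moreover have "{a,b} \<in> E'" using ab 3 unfolding E'_def by blast
      ultimately show ?thesis by (simp add: adjacent_def r_into_rtranclp)
    qed
  qed
  show ?thesis
  proof (cases "x = w0")
    case True
    then show ?thesis using u_w0_v(1) adjacent_sym by (metis r_into_rtranclp)
  next
    case False
    have "(adjacent E)\<^sup>*\<^sup>* x u"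
      using chemical \<open>x \<in> V\<close> in_V connected_graph_iff_rtranclp[OF simple]
      by (simp add: chemical_tree_def is_tree_def)
    from rtranclp_map[of _ _ h x u, OF lift this] show ?thesis
      using False u_w0 by (simp add: h_def)
  qed
qed

lemma connected_E': "connected_graph V E'"
  unfolding connected_graph_iff_rtranclp[OF simple_E']
  using rtranclp_trans[OF rtranclp_E'_to_u rtranclp_adjacent_sym[OF rtranclp_E'_to_u]] by blast

text \<open>A cycle of \<open>E'\<close> avoids the leaf \<open>u\<close>, hence also \<open>w0\<close>, whose only neighbours are \<open>u\<close> and
  \<open>v\<close>; so it is a cycle of \<open>E\<close>.\<close>

lemma acyclic_E': "\<not> has_cycle V E'"
proof
  assume "has_cycle V E'"
  then obtain cs where cycle: "is_path V E' cs" "3 \<le> length cs" "{last cs, hd cs} \<in> E'"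
    by (auto simp: has_cycle_def)
  have "u \<notin> set cs" by (rule leaf_not_on_cycle[OF simple_E' deg_E'_u cycle])
  moreover have "w0 \<notin> set cs"
  proof
    assume "w0 \<in> set cs"
    then obtain a b where "a \<in> set cs" "b \<in> set cs" "a \<noteq> b" "{w0,a} \<in> E'" "{w0,b} \<in> E'"
      by (rule cycle_vertex_neighbours[OF cycle])
    then have "u \<in> {a,b}" using neighbour_E'_w0 by blast
    then show False using \<open>a \<in> set cs\<close> \<open>b \<in> set cs\<close> \<open>u \<notin> set cs\<close> by blast
  qed
  ultimately have same_edges: "{x,y} \<in> E' \<longleftrightarrow> {x,y} \<in> E" if "x \<in> set cs" "y \<in> set cs" for x y
    using edge_E'_iff[of x y] that by blast
  have "cs \<noteq> []" using cycle(2) by auto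
  then have "{last cs, hd cs} \<in> E" using same_edges cycle(3) by simp
  moreover have "is_path V E cs" using is_path_subgraph[OF cycle(1)] same_edges by blast
  ultimately have "has_cycle V E" using cycle(2) by (auto simp: has_cycle_def)
  then show False using chemical by (simp add: chemical_tree_def is_tree_def)
qed

lemma chemical_E': "chemical_tree V E'"
proof -
  have "deg E' x \<le> 4" if "x \<in> V" for x
    using chemical that deg_E'_w0 deg_E'_w1 deg_E'_eq[of x]
    by (cases "x = w0 \<or> x = w1") (auto simp: chemical_tree_def)
  then show ?thesis
    using simple_E' connected_E' acyclic_E' in_V by (auto simp: chemical_tree_def is_tree_def)
qed

lemma segment_ps: "is_segment V E ps"
  using pendent unfolding pendent_path_def is_segment_def by auto

lemma segment_uv: "is_segment V E [u,v]"
  using in_V edge_uv uv_distinct deg_u deg_v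
  unfolding is_segment_def by (auto simp: is_path_Cons_Cons is_path_singleton)

lemma segment_E'_u_w0_v: "is_segment V E' [u,w0,v]"
proof -
  have "2 < deg E' v" using deg_E'_eq[OF v_w0 v_w1] deg_v by simp
  then show ?thesis
    using in_V uv_distinct u_w0 v_w0 deg_E'_u deg_E'_w0 edge_E'_u_w0 edge_E'_w0_v
    unfolding is_segment_def
    by (auto simp: is_path_Cons_Cons is_path_singleton nth_Cons')
qed

lemma segment_E'_tl_ps: "is_segment V E' (tl ps)"
proof -
  obtain x xs where ps_Cons: "ps = x # xs" using ps_nonempty by (cases ps) auto
  have length_tl: "3 \<le> length (tl ps)" using length_ps by simp
  then have "tl ps \<noteq> []" by (metis list.size(3) not_numeral_le_zero)
  then have path_E: "is_path V E (tl ps)" using is_path_appendD[of V E "[x]"] path_ps ps_Cons by simp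
  have "distinct (x # xs)" "u \<notin> set (x # xs)" using distinct_ps u_notin_ps ps_Cons by simp_all
  then have avoid: "w0 \<notin> set (tl ps)" "u \<notin> set (tl ps)" unfolding ps_Cons by simp_all
  have path: "is_path V E' (tl ps)"
  proof (rule is_path_subgraph[OF path_E])
    fix a b assume "a \<in> set (tl ps)" "b \<in> set (tl ps)" "{a,b} \<in> E"
    with avoid show "{a,b} \<in> E'" using edge_E'_iff[of a b] by auto
  qed
  have hd: "hd (tl ps) = w1" using \<open>tl ps \<noteq> []\<close> ps_Cons by (simp add: hd_conv_nth)
  have "last ps \<noteq> w0" "last ps \<noteq> w1" using deg_last deg_w0 deg_w1 by auto
  then have last: "2 < deg E' (last (tl ps))"
    using deg_E'_eq deg_last \<open>tl ps \<noteq> []\<close> by (simp add: last_tl)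
  have "deg E' (tl ps ! i) = 2" if "0 < i" "Suc i < length (tl ps)" for i
  proof -
    have "Suc i < length ps" "0 < length ps" "1 < length ps" using that by auto
    then have "ps ! Suc i \<noteq> w0" "ps ! Suc i \<noteq> w1"
      using that(1) by (simp_all add: nth_eq_iff_index_eq[OF distinct_ps])
    then show ?thesis using that deg_inner[of "Suc i"] deg_E'_eq by (simp add: nth_tl)
  qed
  then show ?thesis using path hd last length_tl deg_E'_w1 unfolding is_segment_def by simp
qed

lemma segments_E_meeting: "{X \<in> segment_sets V E. X \<inter> {u,w0,w1} \<noteq> {}} = {set ps, {u,v}}"
proof (intro equalityI subsetI)
  fix X assume "X \<in> {X \<in> segment_sets V E. X \<inter> {u,w0,w1} \<noteq> {}}"
  then obtain qs where qs: "is_segment V E qs" "X = set qs"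
    and meets: "u \<in> set qs \<or> w0 \<in> set qs \<or> w1 \<in> set qs"
    unfolding segment_sets_def by auto
  have "w1 \<in> set qs \<Longrightarrow> w0 \<in> set qs"
    using segment_deg2_neighbour[OF simple qs(1) _ deg_w1] edge_w0_w1 by (simp add: insert_commute)
  moreover have "w0 \<in> set qs \<Longrightarrow> set qs = set ps"
    by (rule segment_through_leaf[OF simple deg_w0 segment_ps refl qs(1)])
  moreover have "u \<in> set qs \<Longrightarrow> set qs = {u,v}"
    using segment_through_leaf[OF simple deg_u segment_uv _ qs(1)] by simp
  ultimately show "X \<in> {set ps, {u,v}}" using meets qs(2) by blast
next
  fix X assume "X \<in> {set ps, {u,v}}"
  moreover have "set ps \<in> segment_sets V E" "set [u,v] \<in> segment_sets V E"
    using segment_ps segment_uv unfolding segment_sets_def by blast+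
  moreover have "w0 \<in> set ps" using ps_nonempty by (simp add: nth_mem)
  ultimately show "X \<in> {X \<in> segment_sets V E. X \<inter> {u,w0,w1} \<noteq> {}}" by auto
qed

lemma segments_E'_meeting:
  "{X \<in> segment_sets V E'. X \<inter> {u,w0,w1} \<noteq> {}} = {set (tl ps), {u,w0,v}}"
proof (intro equalityI subsetI)
  fix X assume "X \<in> {X \<in> segment_sets V E'. X \<inter> {u,w0,w1} \<noteq> {}}"
  then obtain qs where qs: "is_segment V E' qs" "X = set qs"
    and meets: "u \<in> set qs \<or> w0 \<in> set qs \<or> w1 \<in> set qs"
    unfolding segment_sets_def by auto
  have "w0 \<in> set qs \<Longrightarrow> u \<in> set qs"
    using segment_deg2_neighbour[OF simple_E' qs(1) _ deg_E'_w0, of u] edge_E'_u_w0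
    by (simp add: insert_commute)
  moreover have "u \<in> set qs \<Longrightarrow> set qs = {u,w0,v}"
    using segment_through_leaf[OF simple_E' deg_E'_u segment_E'_u_w0_v _ qs(1)] by simp
  moreover have "w1 \<in> set qs \<Longrightarrow> set qs = set (tl ps)"
    using segment_through_leaf[OF simple_E' deg_E'_w1 segment_E'_tl_ps _ qs(1)] length_ps
    by (simp add: nth_tl)
  ultimately show "X \<in> {set (tl ps), {u,w0,v}}" using meets qs(2) by blast
next
  fix X assume "X \<in> {set (tl ps), {u,w0,v}}"
  moreover have "set (tl ps) \<in> segment_sets V E'" "set [u,w0,v] \<in> segment_sets V E'"
    using segment_E'_tl_ps segment_E'_u_w0_v unfolding segment_sets_def by blast+
  moreover have "w1 \<in> set (tl ps)" using length_ps by (simp add: nth_tl[symmetric])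
  ultimately show "X \<in> {X \<in> segment_sets V E'. X \<inter> {u,w0,w1} \<noteq> {}}" by auto
qed

lemma segments_avoiding:
  "{X \<in> segment_sets V E'. X \<inter> {u,w0,w1} = {}} = {X \<in> segment_sets V E. X \<inter> {u,w0,w1} = {}}"
proof -
  have "is_segment V E' qs \<longleftrightarrow> is_segment V E qs" if "set qs \<inter> {u,w0,w1} = {}" for qs
    using that by (intro is_segment_cong deg_E'_eq edge_E'_iff) auto
  then show ?thesis unfolding segment_sets_def by blast
qed

lemma num_segments_E': "num_segments V E' = num_segments V E"
proof -
  let ?S = "{u,w0,w1}"
  have split: "num_segments V G =
      card {X \<in> segment_sets V G. X \<inter> ?S \<noteq> {}} + card {X \<in> segment_sets V G. X \<inter> ?S = {}}" for G
  proof -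
    have "finite (segment_sets V G)"
      using simple by (simp add: finite_segment_sets simple_graph_def)
    then have "card (segment_sets V G) =
        card {X \<in> segment_sets V G. X \<inter> ?S \<noteq> {}} + card {X \<in> segment_sets V G. X \<inter> ?S = {}}"
      by (subst card_Un_disjoint[symmetric]) (auto intro: arg_cong[where f = card])
    then show ?thesis by (simp add: num_segments_def segment_sets_def)
  qed
  have "w0 \<in> set ps" using ps_nonempty by (simp add: nth_mem)
  moreover have "w1 \<in> set (tl ps)" using length_ps by (simp add: nth_tl[symmetric])
  ultimately have "set ps \<noteq> {u,v}" "set (tl ps) \<noteq> {u,w0,v}"
    using u_w0 v_w0 u_w1 v_w1 w_distinct(1) by auto
  then show ?thesis
    using split[of E] split[of E'] segments_E_meeting segments_E'_meeting segments_avoiding by simp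
qed

definition common_edges :: "'a set set" where
  "common_edges = E - {{w0,w1},{u,v},{w1,w2}}"

lemma common_edges_avoid: "e \<in> common_edges \<Longrightarrow> w0 \<notin> e \<and> w1 \<notin> e"
proof
  assume "e \<in> common_edges"
  then have e: "e \<in> E" "e \<noteq> {w0,w1}" "e \<noteq> {w1,w2}" by (auto simp: common_edges_def)
  show "w0 \<notin> e"
  proof
    assume "w0 \<in> e"
    then have "e \<in> {e\<in>E. w0 \<in> e}" using e(1) by simp
    then show False using incident_E_w0 e(2) by simp
  qed
  show "w1 \<notin> e"
  proof
    assume "w1 \<in> e"
    then obtain y where "e = {w1,y}" using simple_graph_edge_at[OF simple e(1)] by blast
    then show False using neighbour_w1[of y] e by (auto simp: insert_commute)
  qed
qed

lemma M2_E: "M2 E = 6 + deg E v + (\<Sum>e\<in>common_edges. \<Prod>x\<in>e. deg E x)"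
proof -
  have "E = {{w0,w1},{u,v},{w1,w2}} \<union> common_edges"
    using edge_w0_w1 edge_uv edge_w1_w2 by (auto simp: common_edges_def)
  moreover have "{w0,w1} \<noteq> {u,v}" "{w0,w1} \<noteq> {w1,w2}" "{u,v} \<noteq> {w1,w2}"
    using u_w0 u_w1 u_w2 w_distinct by (auto simp: doubleton_eq_iff)
  moreover have "finite common_edges" using finite_E by (simp add: common_edges_def)
  ultimately show ?thesis
    using w_distinct uv_distinct deg_w0 deg_w1 deg_w2 deg_u unfolding M2_def
    by (subst (1) \<open>E = _\<close>, subst sum.union_disjoint) (auto simp: common_edges_def)
qed

lemma M2_E': "M2 E' = 4 + 2 * deg E v + (\<Sum>e\<in>common_edges. \<Prod>x\<in>e. deg E x)"
proof -
  have "{w1,w2} \<noteq> {w0,w1}" "{w1,w2} \<noteq> {u,v}"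
    using u_w1 u_w2 w_distinct by (auto simp: doubleton_eq_iff)
  then have "E' = {{u,w0},{w0,v},{w1,w2}} \<union> common_edges"
    using edge_w1_w2 unfolding E'_def common_edges_def by auto
  moreover have "{u,w0} \<notin> common_edges" "{w0,v} \<notin> common_edges"
    using not_edge_u_w0 not_edge_w0_v by (simp_all add: common_edges_def)
  moreover have "{u,w0} \<noteq> {w0,v}" "{u,w0} \<noteq> {w1,w2}" "{w0,v} \<noteq> {w1,w2}"
    using uv_distinct w_distinct by (auto simp: doubleton_eq_iff)
  moreover have "finite common_edges" using finite_E by (simp add: common_edges_def)
  moreover have "(\<Sum>e\<in>common_edges. \<Prod>x\<in>e. deg E' x) = (\<Sum>e\<in>common_edges. \<Prod>x\<in>e. deg E x)"
    using common_edges_avoid deg_E'_eq by (metis (no_types, lifting) prod.cong sum.cong)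
  ultimately show ?thesis
    using u_w0 v_w0 w_distinct deg_E'_u deg_E'_w0 deg_E'_w1 deg_E'_eq[OF v_w0 v_w1]
      deg_E'_eq[OF w_distinct(2)[symmetric] w_distinct(3)[symmetric]] deg_w2
    unfolding M2_def
    by (subst (1) \<open>E' = _\<close>, subst sum.union_disjoint) (auto simp: common_edges_def)
qed

lemma M2_less: "M2 E < M2 E'"
  using M2_E M2_E' deg_v by simp

end

theorem lemma4:
  fixes V :: "'a set" and E :: "'a set set" and n k :: nat
  assumes "3 \<le> k" and "k \<le> n - 1"
    and "CT V E n k"
    and "\<forall>(V' :: 'a set) E'. CT V' E' n k \<longrightarrow> M2 E' \<le> M2 E"
    and "\<exists>u\<in>V. \<exists>v\<in>V. {u, v} \<in> E \<and> deg E u = 1 \<and> deg E v > 2"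
  shows "\<not> (\<exists>ps. pendent_path V E ps \<and> length ps - 1 > 2)"
proof
  assume "\<exists>ps. pendent_path V E ps \<and> length ps - 1 > 2"
  then obtain ps where "pendent_path V E ps" "4 \<le> length ps" by force
  moreover obtain u v where "{u,v} \<in> E" "deg E u = 1" "2 < deg E v" using assms(5) by blast
  moreover have "chemical_tree V E" using assms(3) by (simp add: CT_def)
  ultimately interpret long_pendent_path V E u v ps by unfold_locales
  have "CT V E' n k"
    using assms(3) chemical_E' num_segments_E' by (simp add: CT_def)
  then show False using assms(4) M2_less by force
qed

end
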